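(* For every $n\ge 3$, the wheel $W_n$ is H$_2$--cordial.
   Context: The wheel $W_n$ has vertex set $\{v_0,v_1,\dots,v_n\}$ and edges $v_0v_i$ for $1\le i\le n$ together with the cycle edges $v_iv_{i+1}$ for $1\le i\le n$ (with $v_{n+1}=v_1$). For a positive integer $k$, an H$_k$--cordial labeling of a graph $G$ is a map $f:E(G)\to\mathbb{Z}$ such that, defining $f(v)=\sum_{e\in I(v)} f(e)$ for each vertex $v$ (where $I(v)$ is the set of edges incident to $v$), we have $1\le |f(e)|\le k$ for every edge $e$, $1\le |f(v)|\le k$ for every vertex $v$, and for each $i$ with $1\le i\le k$, $|e_f(i)-e_f(-i)|\le 1$ and $|v_f(i)-v_f(-i)|\le 1$; here $e_f(c)$ is the number of edges with label $c$ and $v_f(c)$ the number of vertices $v$ with $f(v)=c$. A graph is H$_k$--cordial if it admits an H$_k$--cordial labeling. *)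

theory Defs
  imports Main
begin

definition wheel_vertices :: "nat \<Rightarrow> nat set" where
  "wheel_vertices n = {0..n}"

definition wheel_edges :: "nat \<Rightarrow> nat set set" where
  "wheel_edges n = {{0, i} | i. 1 \<le> i \<and> i \<le> n} \<union>
                   {{i, (i mod n) + 1} | i. 1 \<le> i \<and> i \<le> n}"

definition vertex_label :: "'a set set \<Rightarrow> ('a set \<Rightarrow> int) \<Rightarrow> 'a \<Rightarrow> int" where
  "vertex_label E f v = (\<Sum>e\<in>{e\<in>E. v \<in> e}. f e)"

definition Hk_cordial_labeling ::
  "nat \<Rightarrow> 'a set \<Rightarrow> 'a set set \<Rightarrow> ('a set \<Rightarrow> int) \<Rightarrow> bool" where
  "Hk_cordial_labeling k V E f \<longleftrightarrow>
     (\<forall>e\<in>E. 1 \<le> \<bar>f e\<bar> \<and> \<bar>f e\<bar> \<le> int k) \<and>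
     (\<forall>v\<in>V. 1 \<le> \<bar>vertex_label E f v\<bar> \<and> \<bar>vertex_label E f v\<bar> \<le> int k) \<and>
     (\<forall>i::int. 1 \<le> i \<and> i \<le> int k \<longrightarrow>
        \<bar>int (card {e\<in>E. f e = i}) - int (card {e\<in>E. f e = - i})\<bar> \<le> 1 \<and>
        \<bar>int (card {v\<in>V. vertex_label E f v = i}) - int (card {v\<in>V. vertex_label E f v = - i})\<bar> \<le> 1)"

definition Hk_cordial :: "nat \<Rightarrow> 'a set \<Rightarrow> 'a set set \<Rightarrow> bool" where
  "Hk_cordial k V E \<longleftrightarrow> (\<exists>f. Hk_cordial_labeling k V E f)"

end

(*
  Write k = n div 2.  Label the rim edge v_i v_(i+1) by 1 for i \<le> k and by -1 otherwise.
  The two rim edges at v_i then contribute 2 for 2 \<le> i \<le> k, -2 for k + 2 \<le> i \<le> n,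
  and 0 at v_1 and v_(k+1).  Label the spokes by 2 at v_1, by -1 at v_2, ..., v_k, by -1 or -2
  (n even or odd) at v_(k+1), and by 1 at v_(k+2), ..., v_n.  Every rim vertex label then
  lies in {1, -1, 2, -2}, the spoke labels sum to 1 at the hub, and counting gives n - 1 edges
  labelled 1 against n - n mod 2 labelled -1, one edge labelled 2 against n mod 2 labelled -2,
  and on the vertices k labels 1 against k labels -1, one 2 against n mod 2 labels -2.
*)

theory Submission
  imports Defs
begin

definition spoke :: "nat \<Rightarrow> nat set" where
  "spoke i = {0, i}"

definition rim_edge :: "nat \<Rightarrow> nat \<Rightarrow> nat set" where
  "rim_edge n i = {i, i mod n + 1}"

definition rim_pred :: "nat \<Rightarrow> nat \<Rightarrow> nat" where
  "rim_pred n v = (if v = 1 then n else v - 1)"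

lemma wheel_edges_eq: "wheel_edges n = spoke ` {1..n} \<union> rim_edge n ` {1..n}"
  unfolding wheel_edges_def spoke_def rim_edge_def by auto

lemma inj_spoke: "inj spoke"
  by (rule injI) (metis spoke_def doubleton_eq_iff)

lemma zero_notin_rim_edge: "i \<in> {1..n} \<Longrightarrow> 0 \<notin> rim_edge n i"
  by (simp add: rim_edge_def)

lemma rim_pred_in_range: "v \<in> {1..n} \<Longrightarrow> rim_pred n v \<in> {1..n}"
  by (auto simp: rim_pred_def)

lemma rim_edge_rim_pred: "v \<in> {1..n} \<Longrightarrow> rim_edge n (rim_pred n v) = {rim_pred n v, v}"
  by (auto simp: rim_edge_def rim_pred_def)

lemma mod_Suc_in_range: "i \<in> {1..n} \<Longrightarrow> Suc (i mod n) = (if i = n then 1 else Suc i)"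
  by (cases "i = n") auto

lemma rim_pred_unique:
  assumes "i \<in> {1..n}" "i mod n + 1 = v"
  shows "i = rim_pred n v"
  using assms mod_Suc_in_range[OF assms(1)] by (auto simp: rim_pred_def split: if_splits)

lemma inj_on_rim_edge:
  assumes "n \<ge> 3"
  shows "inj_on (rim_edge n) {1..n}"
proof (rule inj_onI)
  fix i j assume i: "i \<in> {1..n}" and j: "j \<in> {1..n}" and eq: "rim_edge n i = rim_edge n j"
  show "i = j"
  proof (rule ccontr)
    assume "i \<noteq> j"
    with eq have "Suc (i mod n) = j" "Suc (j mod n) = i"
      unfolding rim_edge_def by (auto simp: doubleton_eq_iff)
    then show False
      using assms unfolding mod_Suc_in_range[OF i] mod_Suc_in_range[OF j] by (auto split: if_splits)
  qed
qed

lemma incident_hub: "{e \<in> wheel_edges n. 0 \<in> e} = spoke ` {1..n}"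
  unfolding wheel_edges_eq by (auto simp: spoke_def rim_edge_def)

lemma incident_rim:
  assumes "v \<in> {1..n}"
  shows "{e \<in> wheel_edges n. v \<in> e} = {spoke v, rim_edge n v, rim_edge n (rim_pred n v)}"
proof (intro equalityI subsetI)
  fix e assume "e \<in> {e \<in> wheel_edges n. v \<in> e}"
  then consider i where "i \<in> {1..n}" "e = spoke i" "v \<in> spoke i"
    | i where "i \<in> {1..n}" "e = rim_edge n i" "v \<in> rim_edge n i"
    unfolding wheel_edges_eq by blast
  then show "e \<in> {spoke v, rim_edge n v, rim_edge n (rim_pred n v)}"
  proof cases
    case 1
    then show ?thesis using assms by (auto simp: spoke_def)
  next
    case 2
    then have "v = i \<or> i mod n + 1 = v" by (auto simp: rim_edge_def)
    then show ?thesis using 2 rim_pred_unique[OF 2(1)] by auto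
  qed
next
  have "spoke v \<in> wheel_edges n" "rim_edge n v \<in> wheel_edges n"
    "rim_edge n (rim_pred n v) \<in> wheel_edges n"
    unfolding wheel_edges_eq using assms rim_pred_in_range[OF assms] by blast+
  moreover have "v \<in> spoke v" "v \<in> rim_edge n v"
    by (simp_all add: spoke_def rim_edge_def)
  moreover have "v \<in> rim_edge n (rim_pred n v)"
    by (simp add: rim_edge_rim_pred[OF assms])
  moreover fix e assume "e \<in> {spoke v, rim_edge n v, rim_edge n (rim_pred n v)}"
  ultimately show "e \<in> {e \<in> wheel_edges n. v \<in> e}" by blast
qed

lemma vertex_label_hub: "vertex_label (wheel_edges n) f 0 = (\<Sum>i=1..n. f (spoke i))"
  unfolding vertex_label_def incident_hub
  by (simp add: sum.reindex inj_on_subset[OF inj_spoke] del: One_nat_def)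

lemma vertex_label_rim:
  assumes "n \<ge> 3" "v \<in> {1..n}"
  shows "vertex_label (wheel_edges n) f v =
           f (spoke v) + f (rim_edge n v) + f (rim_edge n (rim_pred n v))"
proof -
  have "rim_pred n v \<noteq> v" "rim_pred n v \<noteq> v mod n + 1"
    using assms mod_Suc_in_range[OF assms(2)] by (auto simp: rim_pred_def)
  then have "spoke v \<noteq> rim_edge n v" "spoke v \<noteq> rim_edge n (rim_pred n v)"
      "rim_edge n v \<noteq> rim_edge n (rim_pred n v)"
    using assms zero_notin_rim_edge rim_pred_in_range[OF assms(2)] inj_on_rim_edge[OF assms(1)]
    by (auto simp: spoke_def dest: inj_onD)
  then show ?thesis
    unfolding vertex_label_def incident_rim[OF assms(2)] by simp
qed

definition wheel_labeling :: "nat \<Rightarrow> (nat \<Rightarrow> int) \<Rightarrow> (nat \<Rightarrow> int) \<Rightarrow> nat set \<Rightarrow> int" where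
  "wheel_labeling n s r e =
     (if 0 \<in> e then s (Max e) else r (the_inv_into {1..n} (rim_edge n) e))"

lemma wheel_labeling_spoke: "wheel_labeling n s r (spoke i) = s i"
  by (simp add: wheel_labeling_def spoke_def max_def)

lemma wheel_labeling_rim_edge:
  assumes "n \<ge> 3" "i \<in> {1..n}"
  shows "wheel_labeling n s r (rim_edge n i) = r i"
  using assms(2) the_inv_into_f_f[OF inj_on_rim_edge[OF assms(1)] assms(2)]
  by (simp add: wheel_labeling_def zero_notin_rim_edge)

lemma card_wheel_labeling_eq:
  assumes "n \<ge> 3"
  shows "card {e \<in> wheel_edges n. wheel_labeling n s r e = c} =
         card {i \<in> {1..n}. s i = c} + card {i \<in> {1..n}. r i = c}"
proof -
  let ?S = "{i \<in> {1..n}. s i = c}" and ?R = "{i \<in> {1..n}. r i = c}"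
  have "{e \<in> wheel_edges n. wheel_labeling n s r e = c} =
      {e \<in> spoke ` {1..n}. wheel_labeling n s r e = c} \<union>
      {e \<in> rim_edge n ` {1..n}. wheel_labeling n s r e = c}"
    unfolding wheel_edges_eq by blast
  also have "\<dots> = spoke ` ?S \<union> rim_edge n ` ?R"
    unfolding Compr_image_eq by (auto simp: wheel_labeling_spoke wheel_labeling_rim_edge[OF assms])
  finally have "{e \<in> wheel_edges n. wheel_labeling n s r e = c} = spoke ` ?S \<union> rim_edge n ` ?R" .
  moreover have "spoke ` ?S \<inter> rim_edge n ` ?R = {}"
    using zero_notin_rim_edge[of _ n] unfolding spoke_def by blast
  moreover have "card (spoke ` ?S) = card ?S"
    by (rule card_image[OF inj_on_subset[OF inj_spoke subset_UNIV]])
  moreover have "card (rim_edge n ` ?R) = card ?R"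
    by (rule card_image[OF inj_on_subset[OF inj_on_rim_edge[OF assms]]]) auto
  ultimately show ?thesis by (simp add: card_Un_disjoint)
qed

lemma vertex_label_wheel_labeling_hub:
  "vertex_label (wheel_edges n) (wheel_labeling n s r) 0 = (\<Sum>i=1..n. s i)"
  by (simp add: vertex_label_hub wheel_labeling_spoke)

lemma vertex_label_wheel_labeling_rim:
  assumes "n \<ge> 3" "v \<in> {1..n}"
  shows "vertex_label (wheel_edges n) (wheel_labeling n s r) v = s v + r v + r (rim_pred n v)"
  using assms wheel_labeling_rim_edge[OF assms(1) rim_pred_in_range[OF assms(2)]]
  by (simp add: vertex_label_rim wheel_labeling_spoke wheel_labeling_rim_edge)

definition spoke_label :: "nat \<Rightarrow> nat \<Rightarrow> int" where
  "spoke_label n i =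
     (if i = 1 then 2 else if i \<le> n div 2 then -1
      else if i = n div 2 + 1 then (if even n then -1 else -2) else 1)"

definition rim_label :: "nat \<Rightarrow> nat \<Rightarrow> int" where
  "rim_label n i = (if i \<le> n div 2 then 1 else -1)"

abbreviation H2_wheel_labeling :: "nat \<Rightarrow> nat set \<Rightarrow> int" where
  "H2_wheel_labeling n \<equiv> wheel_labeling n (spoke_label n) (rim_label n)"

definition H2_wheel_vertex_label :: "nat \<Rightarrow> nat \<Rightarrow> int" where
  "H2_wheel_vertex_label n v =
     (if v = 0 then 1 else if v = 1 then 2 else if v \<le> n div 2 then 1
      else if v = n div 2 + 1 then (if even n then -1 else -2) else -1)"

lemma sum_spoke_label:
  assumes "n \<ge> 3"
  shows "(\<Sum>i=1..n. spoke_label n i) = 1"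
proof -
  define k where "k = n div 2"
  have k: "1 \<le> k" "k + 2 \<le> n" using assms by (auto simp: k_def)
  have "{1..n} = insert 1 (insert (k + 1) ({2..k} \<union> {k + 2..n}))"
    using k by auto
  then have "(\<Sum>i=1..n. spoke_label n i) =
      spoke_label n 1 + spoke_label n (k + 1) + (\<Sum>i=2..k. spoke_label n i) + (\<Sum>i=k+2..n. spoke_label n i)"
    using k by (simp add: sum.union_disjoint)
  also have "(\<Sum>i=2..k. spoke_label n i) = (\<Sum>i=2..k. -1)"
    by (rule sum.cong) (auto simp: spoke_label_def k_def)
  also have "(\<Sum>i=k+2..n. spoke_label n i) = (\<Sum>i=k+2..n. 1)"
    by (rule sum.cong) (auto simp: spoke_label_def k_def)
  finally show ?thesis
    using k by (cases "even n") (auto simp: spoke_label_def k_def elim!: evenE oddE)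
qed

lemma vertex_label_H2_wheel_labeling:
  assumes "n \<ge> 3" "v \<le> n"
  shows "vertex_label (wheel_edges n) (H2_wheel_labeling n) v = H2_wheel_vertex_label n v"
proof (cases "v = 0")
  case True
  then show ?thesis
    using sum_spoke_label[OF assms(1)]
    by (simp add: vertex_label_wheel_labeling_hub H2_wheel_vertex_label_def)
next
  case False
  have "1 \<le> n div 2" "n div 2 + 2 \<le> n" using assms(1) by auto
  with False assms show ?thesis
    by (auto simp: vertex_label_wheel_labeling_rim spoke_label_def rim_label_def rim_pred_def
        H2_wheel_vertex_label_def)
qed

lemma card_spoke_label_eq:
  assumes "n \<ge> 3"
  shows "card {i \<in> {1..n}. spoke_label n i = 1} = n - n div 2 - 1"
    and "card {i \<in> {1..n}. spoke_label n i = -1} = n div 2 - n mod 2"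
    and "card {i \<in> {1..n}. spoke_label n i = 2} = 1"
    and "card {i \<in> {1..n}. spoke_label n i = -2} = n mod 2"
proof -
  have k: "1 \<le> n div 2" "n div 2 + 2 \<le> n" using assms by auto
  have "{i \<in> {1..n}. spoke_label n i = 1} = {n div 2 + 2..n}"
    using k by (auto simp: spoke_label_def)
  then show "card {i \<in> {1..n}. spoke_label n i = 1} = n - n div 2 - 1" by simp
  have "{i \<in> {1..n}. spoke_label n i = -1} = {2..n div 2 + 1 - n mod 2}"
    using k by (auto simp: spoke_label_def even_iff_mod_2_eq_zero)
  then show "card {i \<in> {1..n}. spoke_label n i = -1} = n div 2 - n mod 2" by simp
  have "{i \<in> {1..n}. spoke_label n i = 2} = {1}"
    using k by (auto simp: spoke_label_def)
  then show "card {i \<in> {1..n}. spoke_label n i = 2} = 1" by simp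
  have "{i \<in> {1..n}. spoke_label n i = -2} = (if odd n then {n div 2 + 1} else {})"
    using k by (auto simp: spoke_label_def)
  then show "card {i \<in> {1..n}. spoke_label n i = -2} = n mod 2"
    by (simp add: odd_iff_mod_2_eq_one)
qed

lemma card_rim_label_eq:
  shows "card {i \<in> {1..n}. rim_label n i = 1} = n div 2"
    and "card {i \<in> {1..n}. rim_label n i = -1} = n - n div 2"
    and "card {i \<in> {1..n}. rim_label n i = 2} = 0"
    and "card {i \<in> {1..n}. rim_label n i = -2} = 0"
proof -
  have "{i \<in> {1..n}. rim_label n i = 1} = {1..n div 2}"
    by (auto simp: rim_label_def)
  then show "card {i \<in> {1..n}. rim_label n i = 1} = n div 2" by simp
  have "{i \<in> {1..n}. rim_label n i = -1} = {n div 2 + 1..n}"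
    by (auto simp: rim_label_def)
  then show "card {i \<in> {1..n}. rim_label n i = -1} = n - n div 2" by simp
qed (simp_all add: rim_label_def)

lemma card_H2_wheel_labeling_eq:
  assumes "n \<ge> 3"
  shows "card {e \<in> wheel_edges n. H2_wheel_labeling n e = 1} = n - 1"
    and "card {e \<in> wheel_edges n. H2_wheel_labeling n e = -1} = n - n mod 2"
    and "card {e \<in> wheel_edges n. H2_wheel_labeling n e = 2} = 1"
    and "card {e \<in> wheel_edges n. H2_wheel_labeling n e = -2} = n mod 2"
proof -
  have "1 \<le> n div 2" "n div 2 + 2 \<le> n" "n mod 2 \<le> 1" using assms by auto
  then show "card {e \<in> wheel_edges n. H2_wheel_labeling n e = 1} = n - 1"
    and "card {e \<in> wheel_edges n. H2_wheel_labeling n e = -1} = n - n mod 2"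
    and "card {e \<in> wheel_edges n. H2_wheel_labeling n e = 2} = 1"
    and "card {e \<in> wheel_edges n. H2_wheel_labeling n e = -2} = n mod 2"
    unfolding card_wheel_labeling_eq[OF assms] card_spoke_label_eq[OF assms] card_rim_label_eq
    by linarith+
qed

lemma card_H2_wheel_vertex_label_eq:
  assumes "n \<ge> 3"
  shows "card {v \<in> {0..n}. H2_wheel_vertex_label n v = 1} = n div 2"
    and "card {v \<in> {0..n}. H2_wheel_vertex_label n v = -1} = n div 2"
    and "card {v \<in> {0..n}. H2_wheel_vertex_label n v = 2} = 1"
    and "card {v \<in> {0..n}. H2_wheel_vertex_label n v = -2} = n mod 2"
proof -
  have k: "1 \<le> n div 2" "n div 2 + 2 \<le> n" using assms by auto
  have "{v \<in> {0..n}. H2_wheel_vertex_label n v = 1} = insert 0 {2..n div 2}"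
    using k by (auto simp: H2_wheel_vertex_label_def)
  then show "card {v \<in> {0..n}. H2_wheel_vertex_label n v = 1} = n div 2" using k by simp
  have "{v \<in> {0..n}. H2_wheel_vertex_label n v = -1} = {n div 2 + 1 + n mod 2..n}"
    using k by (auto simp: H2_wheel_vertex_label_def even_iff_mod_2_eq_zero)
  then show "card {v \<in> {0..n}. H2_wheel_vertex_label n v = -1} = n div 2" by (simp, presburger)
  have "{v \<in> {0..n}. H2_wheel_vertex_label n v = 2} = {1}"
    using k by (auto simp: H2_wheel_vertex_label_def)
  then show "card {v \<in> {0..n}. H2_wheel_vertex_label n v = 2} = 1" by simp
  have "{v \<in> {0..n}. H2_wheel_vertex_label n v = -2} = (if odd n then {n div 2 + 1} else {})"
    using k by (auto simp: H2_wheel_vertex_label_def)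
  then show "card {v \<in> {0..n}. H2_wheel_vertex_label n v = -2} = n mod 2"
    by (simp add: odd_iff_mod_2_eq_one)
qed

theorem theorem6:
  fixes n :: nat
  assumes "n \<ge> 3"
  shows "Hk_cordial 2 (wheel_vertices n) (wheel_edges n)"
proof -
  let ?f = "H2_wheel_labeling n"
  have vertex_level_set: "{v \<in> {0..n}. vertex_label (wheel_edges n) ?f v = c} =
      {v \<in> {0..n}. H2_wheel_vertex_label n v = c}" for c
    using vertex_label_H2_wheel_labeling[OF assms] by auto
  have edge_range: "\<forall>e\<in>wheel_edges n. 1 \<le> \<bar>?f e\<bar> \<and> \<bar>?f e\<bar> \<le> 2"
    by (simp add: wheel_labeling_def spoke_label_def rim_label_def)
  have vertex_range: "\<forall>v\<in>{0..n}. 1 \<le> \<bar>vertex_label (wheel_edges n) ?f v\<bar> \<and>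
      \<bar>vertex_label (wheel_edges n) ?f v\<bar> \<le> 2"
    by (simp add: vertex_label_H2_wheel_labeling[OF assms] H2_wheel_vertex_label_def)
  have balanced:
    "\<bar>int (card {e \<in> wheel_edges n. ?f e = i}) - int (card {e \<in> wheel_edges n. ?f e = - i})\<bar> \<le> 1 \<and>
     \<bar>int (card {v \<in> {0..n}. vertex_label (wheel_edges n) ?f v = i}) -
      int (card {v \<in> {0..n}. vertex_label (wheel_edges n) ?f v = - i})\<bar> \<le> 1"
    if "1 \<le> i" "i \<le> 2" for i
  proof -
    have "i = 1 \<or> i = 2" using that by auto
    then show ?thesis
      using card_H2_wheel_labeling_eq[OF assms] card_H2_wheel_vertex_label_eq[OF assms]
      unfolding vertex_level_set by auto
  qed
  have "Hk_cordial_labeling 2 (wheel_vertices n) (wheel_edges n) ?f"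
    unfolding Hk_cordial_labeling_def wheel_vertices_def
    using edge_range vertex_range balanced by simp
  then show ?thesis
    unfolding Hk_cordial_def by blast
qed

end
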